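(* Let $G$ be a weak directed $st$-graph. Then in every complete chain of minimal vertex separators $T_0,T_1,\ldots,T_n$ of $G$ there exists some $T_i$ that contains a critical node.
   Context: A directed $st$-graph $G=(V,E,s,t)$ is a finite directed graph with no self-loops and no parallel edges, with distinct source $s$ (no incoming edges) and sink $t$ (no outgoing edges), such that every vertex lies on some directed walk from $s$ to $t$. Channels: a charge function $\eta:V\to\mathbb{N}\cup\{\infty\}$ with $\eta(s)=\eta(t)=\infty$; a flow for $\eta$ is a finitely supported $\phi$ from the set of $s$–$t$ walks to $\mathbb{N}$ with $\sum_p m_v(p)\phi(p)\le\eta(v)$ for every $v$ ($m_v(p)$ = number of occurrences of $v$ in $p$); value $\sum_p\phi(p)$; $\max_\eta$ = maximum value; $\phi$ inhibits $\eta$ if after subtracting $\phi$'s consumption from $\eta$ no positive-value flow exists; $\min_\eta$ = minimum value of an inhibiting flow; $G$ is weak if $\min_\eta\ne\max_\eta$ for some $\eta$. A vertex separator is a set $T\subseteq V$ meeting every $s$–$t$ walk; an mvs is an inclusion-minimal one. For $u\in V$, $A\subseteq V$: $u\sqsubseteq A$ if every directed walk from $u$ to $t$ contains a vertex of $A$; for $A,A'\subseteq V$, $A\sqsubseteq A'$ if $u\sqsubseteq A'$ for all $u\in A$, and $A\sqsubset A'$ means $A\sqsubseteq A'$ and $A\ne A'$. A sequence of mvs's $T_0,\ldots,T_n$ is a complete chain if $T_0=\{s\}$, $T_n=\{t\}$, $T_i\sqsubset T_{i+1}$ for all $i$, and for every mvs $T$ and every $i$, $T_i\sqsubseteq T\sqsubseteq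 T_{i+1}$ implies $T=T_i$ or $T=T_{i+1}$. A vertex $b$ is a critical node if there exist an mvs $T$ and $a\in T$ with $b\in T$ and a directed walk of length at least one from $a$ to $b$ ($a=b$ allowed). *)

theory Defs
  imports Main "HOL-Library.Extended_Nat"
begin

text \<open>A walk is a nonempty list of vertices whose consecutive entries are edges.
  Its length is the number of edges, i.e. length p - 1.\<close>

definition walk :: "('v \<times> 'v) set \<Rightarrow> 'v list \<Rightarrow> bool" where
  "walk E p \<longleftrightarrow> p \<noteq> [] \<and> (\<forall>i. Suc i < length p \<longrightarrow> (p ! i, p ! Suc i) \<in> E)"

definition walk_from_to :: "('v \<times> 'v) set \<Rightarrow> 'v \<Rightarrow> 'v \<Rightarrow> 'v list \<Rightarrow> bool" where
  "walk_from_to E a b p \<longleftrightarrow> walk E p \<and> hd p = a \<and> last p = b"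

definition st_graph :: "'v set \<Rightarrow> ('v \<times> 'v) set \<Rightarrow> 'v \<Rightarrow> 'v \<Rightarrow> bool" where
  "st_graph V E s t \<longleftrightarrow>
     finite V \<and> E \<subseteq> V \<times> V \<and> (\<forall>v. (v, v) \<notin> E) \<and>
     s \<in> V \<and> t \<in> V \<and> s \<noteq> t \<and>
     (\<forall>u. (u, s) \<notin> E) \<and> (\<forall>w. (t, w) \<notin> E) \<and>
     (\<forall>v\<in>V. \<exists>p. walk_from_to E s t p \<and> v \<in> set p)"

definition flow_support :: "('v list \<Rightarrow> nat) \<Rightarrow> 'v list set" where
  "flow_support \<phi> = {p. \<phi> p \<noteq> 0}"

definition consumption :: "('v list \<Rightarrow> nat) \<Rightarrow> 'v \<Rightarrow> nat" where
  "consumption \<phi> v = (\<Sum>p\<in>flow_support \<phi>. count_list p v * \<phi> p)"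

definition flow_value :: "('v list \<Rightarrow> nat) \<Rightarrow> nat" where
  "flow_value \<phi> = (\<Sum>p\<in>flow_support \<phi>. \<phi> p)"

definition is_flow :: "('v \<times> 'v) set \<Rightarrow> 'v \<Rightarrow> 'v \<Rightarrow> ('v \<Rightarrow> enat) \<Rightarrow> ('v list \<Rightarrow> nat) \<Rightarrow> bool" where
  "is_flow E s t \<eta> \<phi> \<longleftrightarrow>
     finite (flow_support \<phi>) \<and>
     (\<forall>p\<in>flow_support \<phi>. walk_from_to E s t p) \<and>
     (\<forall>v. enat (consumption \<phi> v) \<le> \<eta> v)"

definition residual :: "('v \<Rightarrow> enat) \<Rightarrow> ('v list \<Rightarrow> nat) \<Rightarrow> 'v \<Rightarrow> enat" where
  "residual \<eta> \<phi> v = \<eta> v - enat (consumption \<phi> v)"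

definition inhibits :: "('v \<times> 'v) set \<Rightarrow> 'v \<Rightarrow> 'v \<Rightarrow> ('v list \<Rightarrow> nat) \<Rightarrow> ('v \<Rightarrow> enat) \<Rightarrow> bool" where
  "inhibits E s t \<phi> \<eta> \<longleftrightarrow> is_flow E s t \<eta> \<phi> \<and>
     \<not> (\<exists>\<psi>. is_flow E s t (residual \<eta> \<phi>) \<psi> \<and> flow_value \<psi> > 0)"

text \<open>max and min as extended naturals (Sup/Inf; Inf of the empty set is \<infinity>).\<close>
definition max_flow :: "('v \<times> 'v) set \<Rightarrow> 'v \<Rightarrow> 'v \<Rightarrow> ('v \<Rightarrow> enat) \<Rightarrow> enat" where
  "max_flow E s t \<eta> = Sup {enat (flow_value \<phi>) | \<phi>. is_flow E s t \<eta> \<phi>}"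

definition min_inhibit :: "('v \<times> 'v) set \<Rightarrow> 'v \<Rightarrow> 'v \<Rightarrow> ('v \<Rightarrow> enat) \<Rightarrow> enat" where
  "min_inhibit E s t \<eta> = Inf {enat (flow_value \<phi>) | \<phi>. inhibits E s t \<phi> \<eta>}"

definition charge :: "'v \<Rightarrow> 'v \<Rightarrow> ('v \<Rightarrow> enat) \<Rightarrow> bool" where
  "charge s t \<eta> \<longleftrightarrow> \<eta> s = \<infinity> \<and> \<eta> t = \<infinity>"

definition weak :: "'v set \<Rightarrow> ('v \<times> 'v) set \<Rightarrow> 'v \<Rightarrow> 'v \<Rightarrow> bool" where
  "weak V E s t \<longleftrightarrow> (\<exists>\<eta>. charge s t \<eta> \<and> min_inhibit E s t \<eta> \<noteq> max_flow E s t \<eta>)"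

definition vertex_separator :: "'v set \<Rightarrow> ('v \<times> 'v) set \<Rightarrow> 'v \<Rightarrow> 'v \<Rightarrow> 'v set \<Rightarrow> bool" where
  "vertex_separator V E s t T \<longleftrightarrow> T \<subseteq> V \<and>
     (\<forall>p. walk_from_to E s t p \<longrightarrow> set p \<inter> T \<noteq> {})"

definition mvs :: "'v set \<Rightarrow> ('v \<times> 'v) set \<Rightarrow> 'v \<Rightarrow> 'v \<Rightarrow> 'v set \<Rightarrow> bool" where
  "mvs V E s t T \<longleftrightarrow> vertex_separator V E s t T \<and>
     (\<forall>T'. T' \<subset> T \<longrightarrow> \<not> vertex_separator V E s t T')"

text \<open>u \<sqsubseteq> A: every walk from u to t contains a vertex of A.\<close>
definition below :: "('v \<times> 'v) set \<Rightarrow> 'v \<Rightarrow> 'v \<Rightarrow> 'v set \<Rightarrow> bool" where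
  "below E t u A \<longleftrightarrow> (\<forall>p. walk_from_to E u t p \<longrightarrow> set p \<inter> A \<noteq> {})"

definition set_below :: "('v \<times> 'v) set \<Rightarrow> 'v \<Rightarrow> 'v set \<Rightarrow> 'v set \<Rightarrow> bool" where
  "set_below E t A A' \<longleftrightarrow> (\<forall>u\<in>A. below E t u A')"

definition set_strict_below :: "('v \<times> 'v) set \<Rightarrow> 'v \<Rightarrow> 'v set \<Rightarrow> 'v set \<Rightarrow> bool" where
  "set_strict_below E t A A' \<longleftrightarrow> set_below E t A A' \<and> A \<noteq> A'"

definition complete_chain ::
  "'v set \<Rightarrow> ('v \<times> 'v) set \<Rightarrow> 'v \<Rightarrow> 'v \<Rightarrow> (nat \<Rightarrow> 'v set) \<Rightarrow> nat \<Rightarrow> bool" where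
  "complete_chain V E s t T n \<longleftrightarrow>
     (\<forall>i\<le>n. mvs V E s t (T i)) \<and> T 0 = {s} \<and> T n = {t} \<and>
     (\<forall>i<n. set_strict_below E t (T i) (T (Suc i))) \<and>
     (\<forall>T'. \<forall>i<n. mvs V E s t T' \<and> set_below E t (T i) T' \<and> set_below E t T' (T (Suc i))
        \<longrightarrow> T' = T i \<or> T' = T (Suc i))"

definition critical_node :: "'v set \<Rightarrow> ('v \<times> 'v) set \<Rightarrow> 'v \<Rightarrow> 'v \<Rightarrow> 'v \<Rightarrow> bool" where
  "critical_node V E s t b \<longleftrightarrow>
     (\<exists>T a. mvs V E s t T \<and> a \<in> T \<and> b \<in> T \<and>
        (\<exists>p. walk_from_to E a b p \<and> length p \<ge> 2))"

end

theory Submission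
  imports Defs
begin

text \<open>Suppose no member of the complete chain contains a critical node. Then every vertex \<open>b\<close>
  of an mvs \<open>M\<close> already lies in the chain: otherwise take the step \<open>T\<^sub>j \<sqsubset> T\<^sub>j\<^sub>+\<^sub>1\<close> at which
  \<open>b \<sqsubseteq> T\<^sub>i\<close> starts to hold; the first hits \<open>P\<close> of \<open>M \<union> T\<^sub>j\<^sub>+\<^sub>1\<close> and then the last hits \<open>N\<close> of
  \<open>T\<^sub>j \<union> P\<close> (along walks from \<open>s\<close>, resp. to \<open>t\<close>) are mvs's with \<open>T\<^sub>j \<sqsubseteq> N \<sqsubseteq> T\<^sub>j\<^sub>+\<^sub>1\<close>, and the
  absence of critical nodes forces \<open>b \<in> N\<close>, contradicting completeness. So \<open>G\<close> has no
  critical nodes at all. Then every s-t walk meets every mvs exactly once, hence the value of a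
  flow is its consumption on any mvs. Taking an mvs inside the vertices saturated by an
  inhibiting flow shows that every inhibiting flow is a maximum flow, so \<open>min = max\<close> for every
  charge and \<open>G\<close> is not weak.\<close>

section \<open>Walks\<close>

lemma walk_iff_successively:
  "walk E p \<longleftrightarrow> p \<noteq> [] \<and> successively (\<lambda>x y. (x, y) \<in> E) p"
  by (simp add: walk_def successively_conv_nth)

lemma walk_from_to_walk: "walk_from_to E a b p \<Longrightarrow> walk E p"
  by (simp add: walk_from_to_def)

lemma walk_from_to_Cons_tl: "walk_from_to E a b p \<Longrightarrow> p = a # tl p"
  by (auto simp: walk_from_to_def walk_def)

lemma walk_from_to_butlast_snoc: "walk_from_to E a b p \<Longrightarrow> p = butlast p @ [b]"
  by (auto simp: walk_from_to_def walk_def)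

lemma walk_split:
  assumes "walk E (xs @ x # ys)"
  shows "walk E (xs @ [x])" "walk E (x # ys)"
  using assms by (auto simp: walk_iff_successively successively_append_iff)

lemma walk_glue:
  assumes "walk E (xs @ [x])" "walk E (x # ys)"
  shows "walk E (xs @ x # ys)"
  using assms by (auto simp: walk_iff_successively successively_append_iff successively_Cons)

lemma walk_from_to_split:
  assumes "walk_from_to E a b (xs @ x # ys)"
  shows "walk_from_to E a x (xs @ [x])" "walk_from_to E x b (x # ys)"
  using assms walk_split[of E xs x ys] unfolding walk_from_to_def
  by (auto simp: hd_append)

lemma walk_from_to_glue:
  assumes "walk_from_to E a x (xs @ [x])" "walk_from_to E x b (x # ys)"
  shows "walk_from_to E a b (xs @ x # ys)"
  using assms walk_glue[of E xs x ys] unfolding walk_from_to_def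
  by (auto simp: hd_append)

lemma walk_from_to_append:
  assumes "walk_from_to E a x p" "walk_from_to E x b q"
  shows "walk_from_to E a b (butlast p @ q)"
  using walk_from_to_glue[of E a x "butlast p" b "tl q"] assms
    walk_from_to_butlast_snoc[OF assms(1)] walk_from_to_Cons_tl[OF assms(2)]
  by simp

lemma walk_from_to_infix:
  assumes "walk E (xs @ x # ys @ y # zs)"
  shows "walk_from_to E x y (x # ys @ [y])"
proof -
  have "walk E ((x # ys) @ y # zs)" using walk_split(2)[OF assms] by simp
  then have "walk E ((x # ys) @ [y])" by (rule walk_split(1))
  then show ?thesis by (simp add: walk_from_to_def)
qed

lemma walk_from_to_distinct:
  assumes "walk_from_to E a b p"
  shows "\<exists>p'. walk_from_to E a b p' \<and> distinct p' \<and> set p' \<subseteq> set p"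
  using assms
proof (induction "length p" arbitrary: p rule: less_induct)
  case less
  show ?case
  proof (cases "distinct p")
    case False
    then obtain xs ys zs y where p: "p = xs @ [y] @ ys @ [y] @ zs"
      using not_distinct_decomp by blast
    have "walk_from_to E a y (xs @ [y])" "walk_from_to E y b (y # zs)"
      using walk_from_to_split[of E a b xs y "ys @ [y] @ zs"]
        walk_from_to_split[of E a b "xs @ [y] @ ys" y zs] less.prems p by auto
    then have "walk_from_to E a b (xs @ y # zs)" by (rule walk_from_to_glue)
    moreover have "length (xs @ y # zs) < length p" using p by simp
    ultimately show ?thesis using less.hyps p by fastforce
  qed (use less.prems in blast)
qed

lemma walk_from_to_length: "walk_from_to E a b p \<Longrightarrow> a \<noteq> b \<Longrightarrow> 2 \<le> length p"
  by (cases p) (auto simp: walk_from_to_def walk_def Suc_le_eq)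

lemma walk_vertices_in_edges:
  assumes "walk E p" "2 \<le> length p"
  shows "set p \<subseteq> Domain E \<union> Range E"
proof
  fix v assume "v \<in> set p"
  then obtain i where i: "i < length p" "v = p ! i" by (auto simp: in_set_conv_nth)
  show "v \<in> Domain E \<union> Range E"
  proof (cases "Suc i < length p")
    case True
    then show ?thesis using assms(1) i by (auto simp: walk_def)
  next
    case False
    then have "0 < i" using assms(2) i by linarith
    then have "(p ! (i - 1), p ! i) \<in> E"
      using assms(1) i unfolding walk_def by (metis Suc_diff_1)
    then show ?thesis using i by auto
  qed
qed

lemma source_not_on_walk:
  assumes "\<forall>u. (u, s) \<notin> E" "walk_from_to E a b p" "a \<noteq> s"
  shows "s \<notin> set p"
proof
  assume "s \<in> set p"
  then obtain xs ys where p: "p = xs @ s # ys" by (meson split_list)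
  with assms(2,3) have "xs \<noteq> []" by (auto simp: walk_from_to_def)
  then have "(last xs, s) \<in> E"
    using walk_split(1)[of E xs s ys] assms(2) p
    by (auto simp: walk_from_to_def walk_iff_successively successively_append_iff)
  with assms(1) show False by blast
qed

section \<open>Minimal vertex separators\<close>

lemma vertex_separatorD:
  "vertex_separator V E s t A \<Longrightarrow> walk_from_to E s t p \<Longrightarrow> \<exists>x\<in>set p. x \<in> A"
  unfolding vertex_separator_def by blast

lemma mvs_vertex_separator: "mvs V E s t A \<Longrightarrow> vertex_separator V E s t A"
  by (simp add: mvs_def)

lemma vertex_separator_contains_mvs:
  assumes "finite V" "vertex_separator V E s t S"
  shows "\<exists>M\<subseteq>S. mvs V E s t M"
  using assms(2)
proof (induction "card S" arbitrary: S rule: less_induct)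
  case less
  show ?case
  proof (cases "mvs V E s t S")
    case False
    then obtain S' where S': "S' \<subset> S" "vertex_separator V E s t S'"
      using less.prems unfolding mvs_def by blast
    have "finite S" using less.prems assms(1) finite_subset unfolding vertex_separator_def by metis
    then have "card S' < card S" using S'(1) psubset_card_mono by blast
    then show ?thesis using less.hyps S' by (meson order.trans psubset_imp_subset)
  qed blast
qed

lemma mvs_private_walk:
  assumes "mvs V E s t A" "v \<in> A"
  obtains q where "walk_from_to E s t q" "v \<in> set q" "\<forall>x\<in>set q. x \<in> A \<longrightarrow> x = v"
proof -
  have "\<not> vertex_separator V E s t (A - {v})" "A - {v} \<subseteq> V"
    using assms by (auto simp: mvs_def vertex_separator_def)
  then obtain q where q: "walk_from_to E s t q" "set q \<inter> (A - {v}) = {}"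
    unfolding vertex_separator_def by blast
  moreover have "\<exists>x\<in>set q. x \<in> A"
    using vertex_separatorD[OF mvs_vertex_separator[OF assms(1)] q(1)] .
  ultimately show thesis using that by blast
qed

text \<open>\<open>first_hits\<close> and \<open>last_hits\<close> play the role of the meet and the join of two
  minimal separators in the order \<open>\<sqsubseteq>\<close>.\<close>

definition first_hits :: "('v \<times> 'v) set \<Rightarrow> 'v \<Rightarrow> 'v set \<Rightarrow> 'v set \<Rightarrow> 'v set" where
  "first_hits E s A B =
     {v \<in> A \<union> B. \<exists>p. walk_from_to E s v p \<and> set (butlast p) \<inter> (A \<union> B) = {}}"

definition last_hits :: "('v \<times> 'v) set \<Rightarrow> 'v \<Rightarrow> 'v set \<Rightarrow> 'v set \<Rightarrow> 'v set" where
  "last_hits E t A B =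
     {v \<in> A \<union> B. \<exists>p. walk_from_to E v t p \<and> set (tl p) \<inter> (A \<union> B) = {}}"

lemma first_hits_commute: "first_hits E s A B = first_hits E s B A"
  unfolding first_hits_def by (simp add: Un_commute)

lemma last_hits_commute: "last_hits E t A B = last_hits E t B A"
  unfolding last_hits_def by (simp add: Un_commute)

lemma first_hits_vertex_separator:
  assumes "vertex_separator V E s t A" "vertex_separator V E s t B"
  shows "vertex_separator V E s t (first_hits E s A B)"
  unfolding vertex_separator_def
proof (intro conjI allI impI)
  show "first_hits E s A B \<subseteq> V"
    using assms unfolding first_hits_def vertex_separator_def by auto
next
  fix p assume p: "walk_from_to E s t p"
  then have "\<exists>x\<in>set p. x \<in> A \<union> B" using vertex_separatorD[OF assms(1)] by blast
  then obtain xs x ys where p_eq: "p = xs @ x # ys" "x \<in> A \<union> B" "\<forall>y\<in>set xs. y \<notin> A \<union> B"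
    using split_list_first_prop[of p "\<lambda>x. x \<in> A \<union> B"] by blast
  moreover have "walk_from_to E s x (xs @ [x])" using walk_from_to_split(1) p p_eq(1) by metis
  ultimately have "x \<in> first_hits E s A B" unfolding first_hits_def by fastforce
  then show "set p \<inter> first_hits E s A B \<noteq> {}" using p_eq(1) by auto
qed

lemma last_hits_vertex_separator:
  assumes "vertex_separator V E s t A" "vertex_separator V E s t B"
  shows "vertex_separator V E s t (last_hits E t A B)"
  unfolding vertex_separator_def
proof (intro conjI allI impI)
  show "last_hits E t A B \<subseteq> V"
    using assms unfolding last_hits_def vertex_separator_def by auto
next
  fix p assume p: "walk_from_to E s t p"
  then have "\<exists>x\<in>set p. x \<in> A \<union> B" using vertex_separatorD[OF assms(1)] by blast
  then obtain xs x ys where p_eq: "p = xs @ x # ys" "x \<in> A \<union> B" "\<forall>y\<in>set ys. y \<notin> A \<union> B"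
    using split_list_last_prop[of p "\<lambda>x. x \<in> A \<union> B"] by blast
  moreover have "walk_from_to E x t (x # ys)" using walk_from_to_split(2) p p_eq(1) by metis
  ultimately have "x \<in> last_hits E t A B" unfolding last_hits_def by fastforce
  then show "set p \<inter> last_hits E t A B \<noteq> {}" using p_eq(1) by auto
qed

text \<open>The witness walk follows the first-hit path to \<open>v\<close> and then the tail of a private walk
  of \<open>v\<close> in \<open>A\<close>; another first hit on that tail would give an s-t walk missing \<open>A\<close>.\<close>

lemma first_hits_private_walk:
  assumes A: "mvs V E s t A" and v: "v \<in> first_hits E s A B" "v \<in> A"
  obtains r where "walk_from_to E s t r" "set r \<inter> (first_hits E s A B - {v}) = {}"
proof -
  obtain p where p: "walk_from_to E s v p" "set (butlast p) \<inter> (A \<union> B) = {}"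
    using v(1) unfolding first_hits_def by blast
  obtain q where q: "walk_from_to E s t q" "v \<in> set q" "\<forall>x\<in>set q. x \<in> A \<longrightarrow> x = v"
    using mvs_private_walk[OF A v(2)] .
  obtain q1 q2 where q_eq: "q = q1 @ v # q2" "v \<notin> set q2"
    using split_list_last[OF q(2)] by blast
  have "walk_from_to E v t (v # q2)" using walk_from_to_split(2) q(1) q_eq(1) by metis
  then have r: "walk_from_to E s t (butlast p @ v # q2)" by (rule walk_from_to_append[OF p(1)])
  have "u \<notin> first_hits E s A B" if u: "u \<in> set q2" for u
  proof
    assume "u \<in> first_hits E s A B"
    then obtain p' where p': "walk_from_to E s u p'" "set (butlast p') \<inter> (A \<union> B) = {}"
      unfolding first_hits_def by blast
    obtain qa qb where q2_eq: "q2 = qa @ u # qb" using split_list[OF u] by blast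
    have "walk_from_to E u t (u # qb)"
      using walk_from_to_split(2)[of E s t "q1 @ v # qa" u qb] q(1) q_eq(1) q2_eq by simp
    then have "walk_from_to E s t (butlast p' @ u # qb)" by (rule walk_from_to_append[OF p'(1)])
    moreover have "set (butlast p' @ u # qb) \<inter> A = {}"
      using p'(2) q(3) q_eq q2_eq by auto
    ultimately show False using vertex_separatorD[OF mvs_vertex_separator[OF A]] by blast
  qed
  moreover have "set (butlast p) \<inter> first_hits E s A B = {}"
    using p(2) unfolding first_hits_def by blast
  ultimately have "set (butlast p @ v # q2) \<inter> (first_hits E s A B - {v}) = {}" by auto
  with r show thesis by (rule that)
qed

lemma last_hits_private_walk:
  assumes A: "mvs V E s t A" and v: "v \<in> last_hits E t A B" "v \<in> A"
  obtains r where "walk_from_to E s t r" "set r \<inter> (last_hits E t A B - {v}) = {}"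
proof -
  obtain p where p: "walk_from_to E v t p" "set (tl p) \<inter> (A \<union> B) = {}"
    using v(1) unfolding last_hits_def by blast
  obtain q where q: "walk_from_to E s t q" "v \<in> set q" "\<forall>x\<in>set q. x \<in> A \<longrightarrow> x = v"
    using mvs_private_walk[OF A v(2)] .
  obtain q1 q2 where q_eq: "q = q1 @ v # q2" "v \<notin> set q1"
    using split_list_first[OF q(2)] by blast
  have "walk_from_to E s v (q1 @ [v])" using walk_from_to_split(1) q(1) q_eq(1) by metis
  then have r: "walk_from_to E s t (q1 @ p)"
    using walk_from_to_append[OF _ p(1)] by fastforce
  have "u \<notin> last_hits E t A B" if u: "u \<in> set q1" for u
  proof
    assume "u \<in> last_hits E t A B"
    then obtain p' where p': "walk_from_to E u t p'" "set (tl p') \<inter> (A \<union> B) = {}"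
      unfolding last_hits_def by blast
    obtain qa qb where q1_eq: "q1 = qa @ u # qb" using split_list[OF u] by blast
    have "walk_from_to E s u (qa @ [u])"
      using walk_from_to_split(1)[of E s t qa u "qb @ v # q2"] q(1) q_eq(1) q1_eq by simp
    then have "walk_from_to E s t (qa @ p')" using walk_from_to_append[OF _ p'(1)] by fastforce
    moreover have "set (qa @ p') \<inter> A = {}"
    proof -
      have "set p' = insert u (set (tl p'))"
        by (subst walk_from_to_Cons_tl[OF p'(1)]) simp
      then show ?thesis using p'(2) q(3) q_eq q1_eq by auto
    qed
    ultimately show False using vertex_separatorD[OF mvs_vertex_separator[OF A]] by blast
  qed
  moreover have "set (tl p) \<inter> last_hits E t A B = {}"
    using p(2) unfolding last_hits_def by blast
  moreover have "set p = insert v (set (tl p))"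
    by (subst walk_from_to_Cons_tl[OF p(1)]) simp
  ultimately have "set (q1 @ p) \<inter> (last_hits E t A B - {v}) = {}" by auto
  with r show thesis by (rule that)
qed

lemma first_hits_mvs:
  assumes "mvs V E s t A" "mvs V E s t B"
  shows "mvs V E s t (first_hits E s A B)"
  unfolding mvs_def
proof (intro conjI allI impI)
  show "vertex_separator V E s t (first_hits E s A B)"
    using first_hits_vertex_separator mvs_vertex_separator assms by metis
next
  fix S assume S: "S \<subset> first_hits E s A B"
  then obtain v where v: "v \<in> first_hits E s A B" "v \<notin> S" by blast
  then have "v \<in> A \<or> v \<in> B" unfolding first_hits_def by blast
  then obtain r where "walk_from_to E s t r" "set r \<inter> (first_hits E s A B - {v}) = {}"
    using first_hits_private_walk[OF assms(1) v(1)]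
      first_hits_private_walk[OF assms(2), of v A] v(1) first_hits_commute by metis
  moreover have "S \<subseteq> first_hits E s A B - {v}" using S v by blast
  ultimately show "\<not> vertex_separator V E s t S" unfolding vertex_separator_def by blast
qed

lemma last_hits_mvs:
  assumes "mvs V E s t A" "mvs V E s t B"
  shows "mvs V E s t (last_hits E t A B)"
  unfolding mvs_def
proof (intro conjI allI impI)
  show "vertex_separator V E s t (last_hits E t A B)"
    using last_hits_vertex_separator mvs_vertex_separator assms by metis
next
  fix S assume S: "S \<subset> last_hits E t A B"
  then obtain v where v: "v \<in> last_hits E t A B" "v \<notin> S" by blast
  then have "v \<in> A \<or> v \<in> B" unfolding last_hits_def by blast
  then obtain r where "walk_from_to E s t r" "set r \<inter> (last_hits E t A B - {v}) = {}"
    using last_hits_private_walk[OF assms(1) v(1)]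
      last_hits_private_walk[OF assms(2), of v A] v(1) last_hits_commute by metis
  moreover have "S \<subseteq> last_hits E t A B - {v}" using S v by blast
  ultimately show "\<not> vertex_separator V E s t S" unfolding vertex_separator_def by blast
qed

lemma first_hits_set_below:
  assumes "vertex_separator V E s t B"
  shows "set_below E t (first_hits E s A B) B"
  unfolding set_below_def below_def
proof (intro ballI allI impI)
  fix v w assume v: "v \<in> first_hits E s A B" and w: "walk_from_to E v t w"
  obtain p where p: "walk_from_to E s v p" "set (butlast p) \<inter> (A \<union> B) = {}"
    using v unfolding first_hits_def by blast
  have "walk_from_to E s t (butlast p @ w)" using walk_from_to_append[OF p(1) w] .
  then obtain x where "x \<in> set (butlast p @ w)" "x \<in> B" using vertex_separatorD[OF assms] by blast
  then show "set w \<inter> B \<noteq> {}" using p(2) by auto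
qed

lemma set_below_last_hits: "set_below E t A (last_hits E t A B)"
  unfolding set_below_def below_def
proof (intro ballI allI impI)
  fix u w assume u: "u \<in> A" and w: "walk_from_to E u t w"
  then have "\<exists>x\<in>set w. x \<in> A \<union> B" using walk_from_to_Cons_tl[OF w] by (metis UnI1 list.set_intros(1))
  then obtain xs x ys where w_eq: "w = xs @ x # ys" "x \<in> A \<union> B" "\<forall>y\<in>set ys. y \<notin> A \<union> B"
    using split_list_last_prop[of w "\<lambda>x. x \<in> A \<union> B"] by blast
  moreover have "walk_from_to E x t (x # ys)" using walk_from_to_split(2) w w_eq(1) by metis
  ultimately have "x \<in> last_hits E t A B" unfolding last_hits_def by fastforce
  then show "set w \<inter> last_hits E t A B \<noteq> {}" using w_eq(1) by auto
qed

lemma last_hits_set_below: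
  "set_below E t A C \<Longrightarrow> set_below E t B C \<Longrightarrow> set_below E t (last_hits E t A B) C"
  unfolding set_below_def last_hits_def by blast

section \<open>Critical nodes and complete chains\<close>

lemma critical_node_if_walk_revisits:
  assumes "mvs V E s t X" "walk E (xs @ x # ys)" "x \<in> X" "y \<in> set ys" "y \<in> X"
  shows "critical_node V E s t y"
proof -
  obtain ys1 ys2 where "ys = ys1 @ y # ys2" using split_list[OF assms(4)] by blast
  then have "walk_from_to E x y (x # ys1 @ [y])" using walk_from_to_infix assms(2) by simp
  then show ?thesis unfolding critical_node_def using assms(1,3,5) by fastforce
qed

lemma sum_count_list_mvs_eq_1:
  assumes "finite M" "mvs V E s t M" "\<forall>b\<in>M. \<not> critical_node V E s t b"
    and p: "walk_from_to E s t p"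
  shows "(\<Sum>v\<in>M. count_list p v) = 1"
proof -
  obtain xs x ys where p_eq: "p = xs @ x # ys" "x \<in> M" "\<forall>y\<in>set xs. y \<notin> M"
    using split_list_first_prop[of p "\<lambda>x. x \<in> M"] vertex_separatorD[OF mvs_vertex_separator[OF assms(2)] p]
    by blast
  have "\<forall>y\<in>set ys. y \<notin> M"
    using critical_node_if_walk_revisits[OF assms(2)] walk_from_to_walk[OF p] p_eq assms(3) by blast
  then have "count_list p v = (if v = x then 1 else 0)" if "v \<in> M" for v
    using that p_eq by auto
  then show ?thesis using assms(1) p_eq(2) by simp
qed

lemma below_singleton_sink: "below E t u {t}"
  unfolding below_def walk_from_to_def walk_def by (metis disjoint_insert(1) last_in_set)

lemma not_below_singleton_source:
  assumes G: "st_graph V E s t" and "b \<in> V" "b \<noteq> s"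
  shows "\<not> below E t b {s}"
proof -
  obtain p where p: "walk_from_to E s t p" "b \<in> set p"
    using G assms(2) by (auto simp: st_graph_def)
  then obtain p1 p2 where "p = p1 @ b # p2" by (meson split_list)
  then have w: "walk_from_to E b t (b # p2)" using walk_from_to_split(2) p(1) by metis
  then have "s \<notin> set (b # p2)" using source_not_on_walk G assms(3) by (metis st_graph_def)
  then show ?thesis using w unfolding below_def by blast
qed

lemma nat_switch_point: "\<not> P 0 \<Longrightarrow> P n \<Longrightarrow> \<exists>j<n. \<not> P j \<and> P (Suc j)"
  by (induction n) (auto simp: less_Suc_eq)

lemma complete_chain_switch_point:
  assumes G: "st_graph V E s t" and C: "complete_chain V E s t T n" and "b \<in> V" "b \<noteq> s"
  obtains j where "j < n" "\<not> below E t b (T j)" "below E t b (T (Suc j))"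
proof -
  have "\<not> below E t b (T 0)"
    using not_below_singleton_source[OF G assms(3,4)] C by (simp add: complete_chain_def)
  moreover have "below E t b (T n)"
    using below_singleton_sink C by (simp add: complete_chain_def)
  ultimately show thesis
    using nat_switch_point[of "\<lambda>i. below E t b (T i)"] that by blast
qed

lemma private_vertex_in_first_hits:
  assumes q: "walk_from_to E s t q" "b \<in> set q" "\<forall>x\<in>set q. x \<in> M \<longrightarrow> x = b" and "b \<in> M"
    and Y: "mvs V E s t Y" "b \<notin> Y" "below E t b Y" "\<forall>y\<in>Y. \<not> critical_node V E s t y"
  shows "b \<in> first_hits E s M Y"
proof -
  obtain q1 q2 where q_eq: "q = q1 @ b # q2" "b \<notin> set q1"
    using split_list_first[OF q(2)] by blast
  have "x \<notin> Y" if x: "x \<in> set q1" for x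
  proof
    assume "x \<in> Y"
    have "walk_from_to E b t (b # q2)" using walk_from_to_split(2) q(1) q_eq(1) by metis
    then obtain y where y: "y \<in> set (b # q2)" "y \<in> Y"
      using Y(3) unfolding below_def by blast
    obtain xa xb where "q1 = xa @ x # xb" using split_list[OF x] by blast
    then have "walk E (xa @ x # xb @ b # q2)" using walk_from_to_walk[OF q(1)] q_eq(1) by simp
    then have "critical_node V E s t y"
      using critical_node_if_walk_revisits[OF Y(1)] y Y(2) \<open>x \<in> Y\<close> by auto
    with Y(4) y(2) show False by blast
  qed
  moreover have "x \<notin> M" if "x \<in> set q1" for x
    using that q(3) q_eq by auto
  moreover have "walk_from_to E s b (q1 @ [b])" using walk_from_to_split(1) q(1) q_eq(1) by metis
  ultimately show ?thesis using \<open>b \<in> M\<close> unfolding first_hits_def by fastforce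
qed

lemma private_vertex_in_last_hits:
  assumes q: "walk_from_to E s t q" "b \<in> set q"
    and X: "mvs V E s t X" "\<not> below E t b X" and P: "mvs V E s t P" "b \<in> P"
    and noncritical: "\<forall>x\<in>set q - {b}. x \<in> X \<union> P \<longrightarrow> \<not> critical_node V E s t x"
  shows "b \<in> last_hits E t X P"
proof -
  obtain q1 q2 where q_eq: "q = q1 @ b # q2" "b \<notin> set q2"
    using split_list_last[OF q(2)] by blast
  have q_walk: "walk E (q1 @ b # q2)" using walk_from_to_walk q(1) q_eq(1) by metis
  have q1_walk: "walk_from_to E s b (q1 @ [b])" using walk_from_to_split(1) q(1) q_eq(1) by metis
  have "x \<notin> X" if x: "x \<in> set q2" for x
  proof
    assume "x \<in> X"
    obtain r where r: "walk_from_to E b t r" "set r \<inter> X = {}"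
      using X(2) unfolding below_def by blast
    have "walk_from_to E s t (q1 @ r)" using walk_from_to_append[OF q1_walk r(1)] by simp
    then obtain x0 where "x0 \<in> set q1" "x0 \<in> X"
      using vertex_separatorD[OF mvs_vertex_separator[OF X(1)]] r(2) by fastforce
    moreover obtain xa xb where "q1 = xa @ x0 # xb" using split_list[OF \<open>x0 \<in> set q1\<close>] by blast
    ultimately have "critical_node V E s t x"
      using critical_node_if_walk_revisits[OF X(1), of xa x0 "xb @ b # q2" x] q_walk x \<open>x \<in> X\<close> by auto
    with noncritical x q_eq \<open>x \<in> X\<close> show False by auto
  qed
  moreover have "x \<notin> P" if x: "x \<in> set q2" for x
  proof
    assume "x \<in> P"
    then have "critical_node V E s t x"
      using critical_node_if_walk_revisits[OF P(1) q_walk P(2) x] by blast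
    with noncritical x q_eq \<open>x \<in> P\<close> show False by auto
  qed
  moreover have "walk_from_to E b t (b # q2)" using walk_from_to_split(2) q(1) q_eq(1) by metis
  ultimately show ?thesis using P(2) unfolding last_hits_def by fastforce
qed

lemma mvs_vertex_in_complete_chain:
  assumes G: "st_graph V E s t" and C: "complete_chain V E s t T n"
    and noncritical: "\<forall>i\<le>n. \<forall>b\<in>T i. \<not> critical_node V E s t b"
    and M: "mvs V E s t M" and "b \<in> M"
  shows "\<exists>i\<le>n. b \<in> T i"
proof (rule ccontr)
  assume "\<not> ?thesis"
  then have b_notin: "b \<notin> T i" if "i \<le> n" for i using that by blast
  have "b \<in> V" using M \<open>b \<in> M\<close> by (auto simp: mvs_def vertex_separator_def)
  moreover have "b \<noteq> s" using b_notin[of 0] C by (auto simp: complete_chain_def)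
  ultimately obtain j where j: "j < n" "\<not> below E t b (T j)" "below E t b (T (Suc j))"
    using complete_chain_switch_point[OF G C] by blast
  define X Y where "X = T j" and "Y = T (Suc j)"
  have X: "mvs V E s t X" "\<forall>x\<in>X. \<not> critical_node V E s t x" "b \<notin> X"
    using C noncritical b_notin[of j] less_imp_le[OF j(1)]
    unfolding X_def complete_chain_def by simp_all
  have Y: "mvs V E s t Y" "\<forall>y\<in>Y. \<not> critical_node V E s t y" "b \<notin> Y"
    using C noncritical b_notin[of "Suc j"] Suc_leI[OF j(1)]
    unfolding Y_def complete_chain_def by simp_all
  have XY: "set_below E t X Y"
    using C j(1) unfolding X_def Y_def complete_chain_def set_strict_below_def by simp
  define P where "P = first_hits E s M Y"
  define N where "N = last_hits E t X P"
  obtain q where q: "walk_from_to E s t q" "b \<in> set q" "\<forall>x\<in>set q. x \<in> M \<longrightarrow> x = b"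
    using mvs_private_walk[OF M \<open>b \<in> M\<close>] .
  have P: "mvs V E s t P" "b \<in> P" "P \<subseteq> M \<union> Y"
    using first_hits_mvs[OF M Y(1)] private_vertex_in_first_hits[OF q \<open>b \<in> M\<close> Y(1,3) _ Y(2)] j(3)
    unfolding P_def Y_def first_hits_def by auto
  have "\<forall>x\<in>set q - {b}. x \<in> X \<union> P \<longrightarrow> \<not> critical_node V E s t x"
    using X(2) Y(2) P(3) q(3) by blast
  then have "b \<in> N"
    using private_vertex_in_last_hits[OF q(1,2) X(1) _ P(1,2)] j(2) unfolding N_def X_def by blast
  moreover have "N = X \<or> N = Y"
  proof -
    have "mvs V E s t N" using last_hits_mvs[OF X(1) P(1)] unfolding N_def .
    moreover have "set_below E t X N" using set_below_last_hits unfolding N_def .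
    moreover have "set_below E t N Y"
      using last_hits_set_below[OF XY first_hits_set_below[OF mvs_vertex_separator[OF Y(1)]]]
      unfolding N_def P_def .
    ultimately show ?thesis using C j(1) unfolding complete_chain_def X_def Y_def by blast
  qed
  ultimately show False using X(3) Y(3) by blast
qed

section \<open>Flows without critical nodes\<close>

lemma consumption_eq_sum_superset:
  assumes "finite A" "flow_support \<phi> \<subseteq> A"
  shows "consumption \<phi> v = (\<Sum>p\<in>A. count_list p v * \<phi> p)"
  unfolding consumption_def
  by (rule sum.mono_neutral_left[OF assms]) (auto simp: flow_support_def)

lemma flow_value_eq_sum_superset:
  assumes "finite A" "flow_support \<phi> \<subseteq> A"
  shows "flow_value \<phi> = (\<Sum>p\<in>A. \<phi> p)"
  unfolding flow_value_def
  by (rule sum.mono_neutral_left[OF assms]) (auto simp: flow_support_def)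

lemma flow_value_eq_sum_consumption:
  assumes "finite M" "mvs V E s t M" "\<forall>b\<in>M. \<not> critical_node V E s t b"
    and \<psi>: "is_flow E s t \<eta> \<psi>"
  shows "flow_value \<psi> = (\<Sum>v\<in>M. consumption \<psi> v)"
proof -
  let ?S = "flow_support \<psi>"
  have "(\<Sum>v\<in>M. consumption \<psi> v) = (\<Sum>p\<in>?S. (\<Sum>v\<in>M. count_list p v) * \<psi> p)"
    unfolding consumption_def by (simp add: sum.swap[of _ M] sum_distrib_right)
  also have "\<dots> = (\<Sum>p\<in>?S. \<psi> p)"
  proof (rule sum.cong[OF refl])
    fix p assume "p \<in> ?S"
    then have "walk_from_to E s t p" using \<psi> unfolding is_flow_def by blast
    then show "(\<Sum>v\<in>M. count_list p v) * \<psi> p = \<psi> p"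
      using sum_count_list_mvs_eq_1[OF assms(1-3)] by simp
  qed
  finally show ?thesis unfolding flow_value_def by simp
qed

lemma count_list_distinct: "distinct xs \<Longrightarrow> count_list xs v = (if v \<in> set xs then 1 else 0)"
  by (induction xs) auto

lemma is_flow_zero: "is_flow E s t \<eta> (\<lambda>_. 0)"
  by (simp add: is_flow_def flow_support_def consumption_def zero_enat_def[symmetric])

lemma is_flow_single_walk:
  assumes "walk_from_to E s t p" "distinct p" "\<forall>v\<in>set p. \<eta> v \<noteq> 0"
  shows "is_flow E s t \<eta> (\<lambda>q. if q = p then 1 else 0)"
    and "flow_value (\<lambda>q. if q = p then 1 else 0) = 1"
proof -
  let ?\<psi> = "\<lambda>q. if q = p then 1 else 0 :: nat"
  have supp: "flow_support ?\<psi> = {p}" unfolding flow_support_def by auto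
  have "enat (consumption ?\<psi> v) \<le> \<eta> v" for v
  proof (cases "v \<in> set p")
    case True
    then have "consumption ?\<psi> v = 1"
      using assms(2) unfolding consumption_def supp by (simp add: count_list_distinct)
    with True assms(3) show ?thesis by (cases "\<eta> v") (auto simp: one_enat_def zero_enat_def)
  qed (simp add: consumption_def supp zero_enat_def[symmetric])
  then show "is_flow E s t \<eta> ?\<psi>" using assms(1) supp by (simp add: is_flow_def)
  show "flow_value ?\<psi> = 1" unfolding flow_value_def supp by simp
qed

lemma residual_zero_vertex_separator:
  assumes G: "st_graph V E s t" and "inhibits E s t \<phi> \<eta>"
  shows "vertex_separator V E s t {v\<in>V. residual \<eta> \<phi> v = 0}"
  unfolding vertex_separator_def
proof (intro conjI allI impI notI)
  fix p assume p: "walk_from_to E s t p" and avoid: "set p \<inter> {v\<in>V. residual \<eta> \<phi> v = 0} = {}"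
  obtain p' where p': "walk_from_to E s t p'" "distinct p'" "set p' \<subseteq> set p"
    using walk_from_to_distinct[OF p] by blast
  have "s \<noteq> t" using G by (simp add: st_graph_def)
  with p'(1) have "2 \<le> length p'" by (rule walk_from_to_length)
  then have "set p' \<subseteq> V"
    using walk_vertices_in_edges[OF walk_from_to_walk[OF p'(1)]] G unfolding st_graph_def by blast
  then have "\<forall>v\<in>set p'. residual \<eta> \<phi> v \<noteq> 0" using avoid p'(3) by blast
  then show False
    using is_flow_single_walk[OF p'(1,2)] assms(2) unfolding inhibits_def by fastforce
qed auto

lemma flow_value_le_inhibiting:
  assumes G: "st_graph V E s t" and noncritical: "\<forall>b. \<not> critical_node V E s t b"
    and inh: "inhibits E s t \<phi> \<eta>" and \<psi>: "is_flow E s t \<eta> \<psi>"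
  shows "flow_value \<psi> \<le> flow_value \<phi>"
proof -
  have \<phi>: "is_flow E s t \<eta> \<phi>" using inh by (simp add: inhibits_def)
  have "finite V" using G by (simp add: st_graph_def)
  then obtain M where M: "M \<subseteq> {v\<in>V. residual \<eta> \<phi> v = 0}" "mvs V E s t M"
    using vertex_separator_contains_mvs[OF _ residual_zero_vertex_separator[OF G inh]] by blast
  then have "finite M" using finite_subset[OF _ \<open>finite V\<close>] by blast
  have "consumption \<psi> v \<le> consumption \<phi> v" if "v \<in> M" for v
  proof -
    have "\<eta> v - enat (consumption \<phi> v) = 0" using M(1) that by (auto simp: residual_def)
    then have "\<eta> v \<le> enat (consumption \<phi> v)" by (cases "\<eta> v") (auto simp: zero_enat_def)
    moreover have "enat (consumption \<psi> v) \<le> \<eta> v" using \<psi> by (simp add: is_flow_def)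
    ultimately show ?thesis using order.trans enat_ord_simps(1) by metis
  qed
  then have "(\<Sum>v\<in>M. consumption \<psi> v) \<le> (\<Sum>v\<in>M. consumption \<phi> v)" by (rule sum_mono)
  moreover have "flow_value \<chi> = (\<Sum>v\<in>M. consumption \<chi> v)" if "is_flow E s t \<eta> \<chi>" for \<chi>
    using flow_value_eq_sum_consumption[OF \<open>finite M\<close> M(2) _ that] noncritical by blast
  ultimately show ?thesis using \<phi> \<psi> by simp
qed

lemma is_flow_add_residual:
  assumes \<phi>: "is_flow E s t \<eta> \<phi>" and \<psi>: "is_flow E s t (residual \<eta> \<phi>) \<psi>"
  shows "is_flow E s t \<eta> (\<lambda>p. \<phi> p + \<psi> p)"
    and "flow_value (\<lambda>p. \<phi> p + \<psi> p) = flow_value \<phi> + flow_value \<psi>"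
proof -
  let ?U = "flow_support \<phi> \<union> flow_support \<psi>"
  have supp: "flow_support (\<lambda>p. \<phi> p + \<psi> p) = ?U" unfolding flow_support_def by auto
  have fin: "finite ?U" using \<phi> \<psi> unfolding is_flow_def by blast
  have "consumption (\<lambda>p. \<phi> p + \<psi> p) v = consumption \<phi> v + consumption \<psi> v" for v
    using consumption_eq_sum_superset[OF fin, of \<phi> v] consumption_eq_sum_superset[OF fin, of \<psi> v]
    unfolding consumption_def supp by (simp add: distrib_left sum.distrib)
  moreover have "enat (consumption \<phi> v + consumption \<psi> v) \<le> \<eta> v" for v
  proof (cases "\<eta> v")
    case (enat k)
    have "enat (consumption \<psi> v) \<le> \<eta> v - enat (consumption \<phi> v)"
      using \<psi> unfolding is_flow_def residual_def by blast
    moreover have "enat (consumption \<phi> v) \<le> \<eta> v" using \<phi> unfolding is_flow_def by blast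
    ultimately show ?thesis using enat by simp
  qed simp
  ultimately show "is_flow E s t \<eta> (\<lambda>p. \<phi> p + \<psi> p)"
    using \<phi> \<psi> fin supp unfolding is_flow_def by auto
  show "flow_value (\<lambda>p. \<phi> p + \<psi> p) = flow_value \<phi> + flow_value \<psi>"
    using flow_value_eq_sum_superset[OF fin, of \<phi>] flow_value_eq_sum_superset[OF fin, of \<psi>]
    unfolding flow_value_def supp by (simp add: sum.distrib)
qed

lemma inhibiting_flow_exists_if_bounded:
  assumes bounded: "\<And>\<phi>. is_flow E s t \<eta> \<phi> \<Longrightarrow> flow_value \<phi> \<le> B"
  shows "\<exists>\<phi>. inhibits E s t \<phi> \<eta>"
proof -
  define vals where "vals = flow_value ` Collect (is_flow E s t \<eta>)"
  have "vals \<subseteq> {..B}" using bounded unfolding vals_def by blast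
  then have "finite vals" using finite_subset by blast
  moreover have "(\<lambda>_. 0) \<in> Collect (is_flow E s t \<eta>)" using is_flow_zero by simp
  then have "vals \<noteq> {}" unfolding vals_def by blast
  ultimately have "Max vals \<in> vals" by (rule Max_in)
  then obtain \<phi> where \<phi>: "is_flow E s t \<eta> \<phi>" "flow_value \<phi> = Max vals"
    unfolding vals_def by auto
  have "\<not> flow_value \<psi> > 0" if \<psi>: "is_flow E s t (residual \<eta> \<phi>) \<psi>" for \<psi>
  proof -
    have "flow_value (\<lambda>p. \<phi> p + \<psi> p) \<in> vals"
      using is_flow_add_residual(1)[OF \<phi>(1) \<psi>] unfolding vals_def by simp
    then have "flow_value (\<lambda>p. \<phi> p + \<psi> p) \<le> flow_value \<phi>"
      using Max_ge[OF \<open>finite vals\<close>] \<phi>(2) by simp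
    then show ?thesis using is_flow_add_residual(2)[OF \<phi>(1) \<psi>] by simp
  qed
  then have "inhibits E s t \<phi> \<eta>" using \<phi>(1) unfolding inhibits_def by blast
  then show ?thesis by blast
qed

lemma min_inhibit_eq_max_flow:
  assumes G: "st_graph V E s t" and noncritical: "\<forall>b. \<not> critical_node V E s t b"
  shows "min_inhibit E s t \<eta> = max_flow E s t \<eta>"
proof -
  define S where "S = {enat (flow_value \<phi>) | \<phi>. is_flow E s t \<eta> \<phi>}"
  define I where "I = {enat (flow_value \<phi>) | \<phi>. inhibits E s t \<phi> \<eta>}"
  have "Sup S = Inf I"
  proof (cases "I = {}")
    case False
    then obtain y where "y \<in> I" by blast
    have "x \<le> y" if "x \<in> S" "y \<in> I" for x y
      using that flow_value_le_inhibiting[OF G noncritical] unfolding S_def I_def by fastforce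
    then have "Sup S \<le> Inf I" by (intro Sup_least Inf_greatest)
    moreover have "I \<subseteq> S" unfolding I_def S_def inhibits_def by blast
    then have "Inf I \<le> Sup S" using \<open>y \<in> I\<close> by (meson Inf_lower Sup_upper order.trans subsetD)
    ultimately show ?thesis by simp
  next
    case True
    txt \<open>\<open>Inf {} = \<infinity>\<close>, so here the flow values must be unbounded.\<close>
    have "Sup S = \<infinity>"
    proof (rule ccontr)
      assume "Sup S \<noteq> \<infinity>"
      then obtain B where B: "Sup S = enat B" by (cases "Sup S") auto
      have "flow_value \<phi> \<le> B" if "is_flow E s t \<eta> \<phi>" for \<phi>
      proof -
        have "enat (flow_value \<phi>) \<in> S" using that unfolding S_def by blast
        then show ?thesis using B Sup_upper by (metis enat_ord_simps(1))
      qed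
      then obtain \<phi> where "inhibits E s t \<phi> \<eta>"
        using inhibiting_flow_exists_if_bounded[of E s t \<eta> B] by blast
      then have "enat (flow_value \<phi>) \<in> I" unfolding I_def by blast
      with True show False by blast
    qed
    with True show ?thesis by (simp add: top_enat_def)
  qed
  then show ?thesis unfolding min_inhibit_def max_flow_def S_def I_def by simp
qed

theorem theorem2:
  fixes V :: "'v set" and E :: "('v \<times> 'v) set" and s t :: 'v
    and T :: "nat \<Rightarrow> 'v set" and n :: nat
  assumes "st_graph V E s t"
    and "weak V E s t"
    and "complete_chain V E s t T n"
  shows "\<exists>i\<le>n. \<exists>b\<in>T i. critical_node V E s t b"
proof (rule ccontr)
  assume chain_noncritical: "\<not> ?thesis"
  have "\<forall>b. \<not> critical_node V E s t b"
  proof (intro allI notI)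
    fix b assume "critical_node V E s t b"
    moreover obtain M where "mvs V E s t M" "b \<in> M"
      using \<open>critical_node V E s t b\<close> unfolding critical_node_def by blast
    ultimately show False
      using mvs_vertex_in_complete_chain[OF assms(1,3)] chain_noncritical by blast
  qed
  then have "min_inhibit E s t \<eta> = max_flow E s t \<eta>" for \<eta>
    by (rule min_inhibit_eq_max_flow[OF assms(1)])
  with assms(2) show False unfolding weak_def by blast
qed

end
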